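(* Under the hypotheses of Theorem 5 (graph $G$, integer $k$, $\Gamma\subseteq E$ with $|\Gamma|\ge 2$, $0<\epsilon<1$, positive integer $\ell$, and $s\ge\frac{(\ell+1)\ln|\Gamma|}{2\epsilon^2}$ independent uniformly random permutations used to form the estimates $\Phi'_e$), fix a budget $b\le|\Gamma|$. Let $\Phi_{O1}\ge\Phi_{O2}\ge\dots\ge\Phi_{Ob}$ be the $b$ largest exact Shapley values among edges of $\Gamma$, and let $B$ be the set of $b$ edges with the largest estimates $\Phi'_e$, whose exact Shapley values sorted in non-increasing order are $\Phi_{A1}\ge\Phi_{A2}\ge\dots\ge\Phi_{Ab}$. Then for every $i\in\{1,\dots,b\}$, $$\Pr\big(|\Phi_{Oi}-\Phi_{Ai}|<2\epsilon\cdot N_k\big)\ \ge\ 1-2|\Gamma|^{-\ell},$$ where $N_k$ is the number of vertices of the $k$-core of $G$.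
   Context: For a graph $G=(V,E)$ and integer $k\ge0$, the $k$-core $C_k(G)$ is the maximal induced subgraph in which every vertex has degree at least $k$; $N_k=N_k(G)$ is its number of vertices. For $P\subseteq\Gamma$, $\mathscr{V}(P)=N_k(G)-N_k((V,E\setminus P))$. For a permutation $\pi$ of $\Gamma$, $P_e(\pi)$ is the set of edges before $e$ in $\pi$. The Shapley value is $\Phi_e=\frac{1}{|\Gamma|!}\sum_{\pi}\big(\mathscr{V}(P_e(\pi)\cup\{e\})-\mathscr{V}(P_e(\pi))\big)$ over all permutations $\pi$ of $\Gamma$, and the estimate from sampled permutations $\pi_1,\dots,\pi_s$ is $\Phi'_e=\frac1s\sum_{i=1}^s\big(\mathscr{V}(P_e(\pi_i)\cup\{e\})-\mathscr{V}(P_e(\pi_i))\big)$. *)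

theory Defs
  imports "HOL-Probability.Probability" "HOL-Combinatorics.Multiset_Permutations"
begin

definition simple_graph :: "'a set \<Rightarrow> 'a set set \<Rightarrow> bool" where
  "simple_graph V E \<longleftrightarrow> finite V \<and> (\<forall>e\<in>E. e \<subseteq> V \<and> card e = 2)"

definition induced_degree :: "'a set set \<Rightarrow> 'a set \<Rightarrow> 'a \<Rightarrow> nat" where
  "induced_degree E S v = card {u \<in> S. {u, v} \<in> E}"

text \<open>Vertex set of the k-core: the maximal vertex set S \<subseteq> V whose induced
  subgraph has minimum degree at least k (= union of all such sets).\<close>
definition kcore :: "nat \<Rightarrow> 'a set \<Rightarrow> 'a set set \<Rightarrow> 'a set" where
  "kcore k V E = \<Union>{S. S \<subseteq> V \<and> (\<forall>v\<in>S. k \<le> induced_degree E S v)}"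

definition Nk :: "nat \<Rightarrow> 'a set \<Rightarrow> 'a set set \<Rightarrow> nat" where
  "Nk k V E = card (kcore k V E)"

definition coal_val :: "nat \<Rightarrow> 'a set \<Rightarrow> 'a set set \<Rightarrow> 'a set set \<Rightarrow> real" where
  "coal_val k V E P = real (Nk k V E) - real (Nk k V (E - P))"

text \<open>Edges before e in the permutation \<pi> (a list enumerating \<Gamma>).\<close>
definition pred_set :: "'e list \<Rightarrow> 'e \<Rightarrow> 'e set" where
  "pred_set \<pi> e = set (takeWhile (\<lambda>x. x \<noteq> e) \<pi>)"

definition marg :: "nat \<Rightarrow> 'a set \<Rightarrow> 'a set set \<Rightarrow> 'a set list \<Rightarrow> 'a set \<Rightarrow> real" where
  "marg k V E \<pi> e = coal_val k V E (pred_set \<pi> e \<union> {e}) - coal_val k V E (pred_set \<pi> e)"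

definition shapley :: "nat \<Rightarrow> 'a set \<Rightarrow> 'a set set \<Rightarrow> 'a set set \<Rightarrow> 'a set \<Rightarrow> real" where
  "shapley k V E \<Gamma> e = (\<Sum>\<pi>\<in>permutations_of_set \<Gamma>. marg k V E \<pi> e) / fact (card \<Gamma>)"

definition shapley_est :: "nat \<Rightarrow> 'a set \<Rightarrow> 'a set set \<Rightarrow> nat \<Rightarrow> (nat \<Rightarrow> 'a set list) \<Rightarrow> 'a set \<Rightarrow> real" where
  "shapley_est k V E s \<omega> e = (\<Sum>i<s. marg k V E (\<omega> i) e) / real s"

definition perm_samples :: "'e set \<Rightarrow> nat \<Rightarrow> (nat \<Rightarrow> 'e list) pmf" where
  "perm_samples \<Gamma> s = Pi_pmf {..<s} [] (\<lambda>_. pmf_of_set (permutations_of_set \<Gamma>))"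

definition is_top :: "nat \<Rightarrow> ('e \<Rightarrow> real) \<Rightarrow> 'e set \<Rightarrow> 'e set \<Rightarrow> bool" where
  "is_top b f \<Gamma> B \<longleftrightarrow> B \<subseteq> \<Gamma> \<and> card B = b \<and> (\<forall>x\<in>B. \<forall>y\<in>\<Gamma> - B. f y \<le> f x)"

text \<open>i-th largest (1-based, with multiplicity) value of f on the finite set A.\<close>
definition nth_largest :: "('e \<Rightarrow> real) \<Rightarrow> 'e set \<Rightarrow> nat \<Rightarrow> real" where
  "nth_largest f A i = rev (sorted_list_of_multiset (image_mset f (mset_set A))) ! (i - 1)"

end

theory Submission
  imports Defs
begin

text \<open>Removing edges can only shrink the k-core, so every marginal contribution
  \<open>\<V>(P \<union> {e}) - \<V>(P)\<close> lies in \<open>[0, N\<^sub>k]\<close>. Hence each estimate \<open>\<Phi>'\<^sub>e\<close> is the mean of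
  \<open>s\<close> i.i.d. samples in \<open>[0, N\<^sub>k]\<close> with mean \<open>\<Phi>\<^sub>e\<close>, and Hoeffding's inequality with a
  union bound over \<open>\<Gamma>\<close> makes all estimates \<open>\<epsilon> N\<^sub>k\<close>-accurate with probability at least
  \<open>1 - 2|\<Gamma>|\<^sup>-\<^sup>l\<close>. On that event the claim is deterministic: ranking by values that are
  each within \<open>\<delta>\<close> of the true ones moves the \<open>i\<close>-th largest true value of the selected
  set by less than \<open>2\<delta>\<close>.\<close>

lemma kcore_subset: "kcore k V E \<subseteq> V"
  unfolding kcore_def by auto

lemma kcore_mono:
  assumes "finite V" "E' \<subseteq> E"
  shows "kcore k V E' \<subseteq> kcore k V E"
proof
  fix x assume "x \<in> kcore k V E'"
  then obtain S where S: "S \<subseteq> V" "\<forall>v\<in>S. k \<le> induced_degree E' S v" "x \<in> S"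
    unfolding kcore_def by auto
  have "finite S"
    using S(1) assms(1) by (rule finite_subset)
  then have "induced_degree E' S v \<le> induced_degree E S v" for v
    unfolding induced_degree_def using assms(2) by (intro card_mono) auto
  with S(2) have "\<forall>v\<in>S. k \<le> induced_degree E S v"
    using le_trans by blast
  with S(1,3) show "x \<in> kcore k V E"
    unfolding kcore_def by auto
qed

lemma Nk_mono:
  assumes "finite V" "E' \<subseteq> E"
  shows "Nk k V E' \<le> Nk k V E"
  unfolding Nk_def
  by (rule card_mono[OF finite_subset[OF kcore_subset assms(1)] kcore_mono[OF assms]])

lemma marg_bounds:
  assumes "finite V"
  shows "marg k V E \<pi> e \<in> {0..real (Nk k V E)}"
proof -
  let ?P = "pred_set \<pi> e"
  have "Nk k V (E - (?P \<union> {e})) \<le> Nk k V (E - ?P)" "Nk k V (E - ?P) \<le> Nk k V E"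
    by (auto intro: Nk_mono[OF assms])
  then show ?thesis
    unfolding marg_def coal_val_def by simp
qed

lemma expectation_pmf_of_permutations:
  fixes h :: "'e list \<Rightarrow> real"
  assumes "finite A"
  shows "measure_pmf.expectation (pmf_of_set (permutations_of_set A)) h
           = (\<Sum>\<pi>\<in>permutations_of_set A. h \<pi>) / fact (card A)"
  using assms by (subst integral_pmf_of_set) auto

lemma perm_samples_component:
  assumes "j < s"
  shows "map_pmf (\<lambda>\<omega>. \<omega> j) (perm_samples A s) = pmf_of_set (permutations_of_set A)"
  unfolding perm_samples_def using assms by (subst Pi_pmf_component) auto

lemma distr_perm_samples_component:
  assumes "j < s"
  shows "distr (measure_pmf (perm_samples A s)) borel (\<lambda>\<omega>. h (\<omega> j))
           = distr (measure_pmf (pmf_of_set (permutations_of_set A))) borel h"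
proof -
  have "distr (measure_pmf (perm_samples A s)) borel (\<lambda>\<omega>. h (\<omega> j))
          = distr (measure_pmf (map_pmf (\<lambda>\<omega>. \<omega> j) (perm_samples A s))) borel h"
    unfolding map_pmf_rep_eq by (subst distr_distr) (auto simp: o_def)
  then show ?thesis
    by (simp only: perm_samples_component[OF assms])
qed

lemma prob_perm_samples_mean_deviation:
  fixes h :: "'e list \<Rightarrow> real"
  assumes "finite A" "0 < s" "0 < c" "\<And>\<pi>. h \<pi> \<in> {0..c}" "0 \<le> \<delta>"
  shows "measure_pmf.prob (perm_samples A s)
           {\<omega>. \<delta> * c \<le> \<bar>(\<Sum>j<s. h (\<omega> j)) / real s
                         - (\<Sum>\<pi>\<in>permutations_of_set A. h \<pi>) / fact (card A)\<bar>}
         \<le> 2 * exp (- 2 * real s * \<delta>\<^sup>2)"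
proof -
  define P where "P = perm_samples A s"
  define X where "X = (\<lambda>j (\<omega>::nat \<Rightarrow> 'e list). h (\<omega> j))"
  have "measure_pmf.expectation P (X 0)
          = measure_pmf.expectation (map_pmf (\<lambda>\<omega>. \<omega> 0) P) h"
    by (simp add: X_def)
  also have "\<dots> = (\<Sum>\<pi>\<in>permutations_of_set A. h \<pi>) / fact (card A)"
    unfolding P_def perm_samples_component[OF assms(2)]
    by (rule expectation_pmf_of_permutations[OF assms(1)])
  finally have mean: "measure_pmf.expectation P (X 0)
                        = (\<Sum>\<pi>\<in>permutations_of_set A. h \<pi>) / fact (card A)" .
  interpret Hoeffding_ineq_iid "measure_pmf P" "{..<s}" X "X 0" 0 c
    "measure_pmf.expectation P (X 0)"
  proof unfold_locales
    show "prob_space.indep_vars (measure_pmf P) (\<lambda>_. borel) X {..<s}"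
      unfolding P_def perm_samples_def X_def
      by (intro prob_space.indep_vars_compose2[OF _ indep_vars_Pi_pmf])
         (auto simp: measure_pmf.prob_space_axioms)
    show "distr (measure_pmf P) borel (X j) = distr (measure_pmf P) borel (X 0)"
      if "j \<in> {..<s}" for j
      using that assms(2) by (simp add: P_def X_def distr_perm_samples_component)
  qed (use assms(3,4) in \<open>auto simp: X_def\<close>)
  have "measure_pmf.prob P {\<omega>\<in>space (measure_pmf P).
            \<bar>(\<Sum>j\<in>{..<s}. X j \<omega>) / card {..<s} - measure_pmf.expectation P (X 0)\<bar> \<ge> \<delta> * c}
          \<le> 2 * exp (- 2 * real (card {..<s}) * (\<delta> * c)\<^sup>2 / (c - 0)\<^sup>2)"
    by (rule Hoeffding_ineq_abs_ge') (use assms in auto)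
  also have "2 * exp (- 2 * real (card {..<s}) * (\<delta> * c)\<^sup>2 / (c - 0)\<^sup>2)
               = 2 * exp (- 2 * real s * \<delta>\<^sup>2)"
    using assms(3) by (simp add: power_mult_distrib)
  finally have "measure_pmf.prob P {\<omega>. \<delta> * c \<le> \<bar>(\<Sum>j<s. X j \<omega>) / real s
                   - measure_pmf.expectation P (X 0)\<bar>} \<le> 2 * exp (- 2 * real s * \<delta>\<^sup>2)"
    by simp
  then show ?thesis
    unfolding mean unfolding P_def X_def .
qed

lemma prob_shapley_est_deviation:
  assumes "finite V" "finite \<Gamma>" "0 < s" "0 < Nk k V E" "0 \<le> \<delta>"
  shows "measure_pmf.prob (perm_samples \<Gamma> s)
           {\<omega>. \<delta> * real (Nk k V E) \<le> \<bar>shapley_est k V E s \<omega> e - shapley k V E \<Gamma> e\<bar>}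
         \<le> 2 * exp (- 2 * real s * \<delta>\<^sup>2)"
  using prob_perm_samples_mean_deviation[OF assms(2,3) _ marg_bounds[OF assms(1)] assms(5)]
    assms(4)
  unfolding shapley_est_def shapley_def by simp

lemma exp_sample_size_bound:
  assumes "1 < n" "0 < \<epsilon>" "(real l + 1) * ln n / (2 * \<epsilon>\<^sup>2) \<le> real s"
  shows "exp (- 2 * real s * \<epsilon>\<^sup>2) \<le> 1 / n ^ (l + 1)"
proof -
  have "ln (n ^ (l + 1)) = (real l + 1) * ln n"
    using ln_realpow[of n "l + 1"] assms(1) by simp
  also have "\<dots> \<le> 2 * real s * \<epsilon>\<^sup>2"
    using assms(2,3) by (simp add: pos_divide_le_eq mult_ac)
  finally have "exp (- 2 * real s * \<epsilon>\<^sup>2) \<le> exp (- ln (n ^ (l + 1)))"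
    by simp
  also have "\<dots> = 1 / n ^ (l + 1)"
    using assms(1) by (simp add: exp_minus field_simps)
  finally show ?thesis .
qed

lemma prob_all_shapley_est_close:
  assumes "finite V" "finite \<Gamma>" "2 \<le> card \<Gamma>" "0 < \<epsilon>" "0 < Nk k V E"
    and "(real l + 1) * ln (card \<Gamma>) / (2 * \<epsilon>\<^sup>2) \<le> real s"
  shows "1 - 2 / real (card \<Gamma>) ^ l
         \<le> measure_pmf.prob (perm_samples \<Gamma> s)
              {\<omega>. \<forall>e\<in>\<Gamma>. \<bar>shapley_est k V E s \<omega> e - shapley k V E \<Gamma> e\<bar> < \<epsilon> * real (Nk k V E)}"
proof -
  define n where "n = real (card \<Gamma>)"
  define P where "P = perm_samples \<Gamma> s"
  define bad where
    "bad e = {\<omega>. \<epsilon> * real (Nk k V E) \<le> \<bar>shapley_est k V E s \<omega> e - shapley k V E \<Gamma> e\<bar>}" for e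
  have n: "2 \<le> n"
    using assms(3) by (simp add: n_def)
  have "0 < (real l + 1) * ln n / (2 * \<epsilon>\<^sup>2)"
    using n assms(4) by simp
  then have "0 < s"
    using assms(6) by (simp add: n_def)
  have bad: "measure_pmf.prob P (bad e) \<le> 2 / n ^ (l + 1)" for e
  proof -
    have "measure_pmf.prob P (bad e) \<le> 2 * exp (- 2 * real s * \<epsilon>\<^sup>2)"
      unfolding P_def bad_def
      using prob_shapley_est_deviation[OF assms(1,2) \<open>0 < s\<close> assms(5)] assms(4) by simp
    also have "\<dots> \<le> 2 / n ^ (l + 1)"
      using exp_sample_size_bound[of n \<epsilon> l s] n assms(4,6) by (simp add: n_def)
    finally show ?thesis .
  qed
  have "measure_pmf.prob P (\<Union>e\<in>\<Gamma>. bad e) \<le> (\<Sum>e\<in>\<Gamma>. measure_pmf.prob P (bad e))"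
    using assms(2) by (intro measure_pmf.finite_measure_subadditive_finite) auto
  also have "\<dots> \<le> (\<Sum>e\<in>\<Gamma>. 2 / n ^ (l + 1))"
    by (intro sum_mono bad)
  also have "\<dots> = 2 / n ^ l"
    using n by (simp add: n_def[symmetric] field_simps)
  finally have "1 - 2 / n ^ l \<le> measure_pmf.prob P (UNIV - (\<Union>e\<in>\<Gamma>. bad e))"
    using measure_pmf.prob_compl[of "\<Union>e\<in>\<Gamma>. bad e" P] by simp
  also have "UNIV - (\<Union>e\<in>\<Gamma>. bad e)
               = {\<omega>. \<forall>e\<in>\<Gamma>. \<bar>shapley_est k V E s \<omega> e - shapley k V E \<Gamma> e\<bar> < \<epsilon> * real (Nk k V E)}"
    by (auto simp: bad_def not_le)
  finally show ?thesis
    by (simp add: P_def n_def)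
qed

definition sorted_values :: "('e \<Rightarrow> real) \<Rightarrow> 'e set \<Rightarrow> real list" where
  "sorted_values f A = sorted_list_of_multiset (image_mset f (mset_set A))"

lemma sorted_sorted_values: "sorted (sorted_values f A)"
  by (simp add: sorted_values_def)

lemma length_sorted_values: "length (sorted_values f A) = card A"
  by (metis sorted_values_def mset_sorted_list_of_multiset size_image_mset size_mset
        size_mset_set)

lemma length_filter_sorted_values:
  assumes "finite A"
  shows "length (filter P (sorted_values f A)) = card {a\<in>A. P (f a)}"
proof -
  have "length (filter P (sorted_values f A)) = size (filter_mset P (image_mset f (mset_set A)))"
    by (metis sorted_values_def mset_filter mset_sorted_list_of_multiset size_mset)
  also have "\<dots> = card {a\<in>A. P (f a)}"
    using assms by (simp add: filter_mset_image_mset)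
  finally show ?thesis .
qed

lemma nth_largest_conv_sorted_values:
  assumes "finite A" "1 \<le> i" "i \<le> card A"
  shows "nth_largest f A i = sorted_values f A ! (card A - i)"
  unfolding nth_largest_def sorted_values_def[symmetric]
  using assms length_sorted_values[of f A]
  by (subst rev_nth) (auto simp: Suc_diff_le)

text \<open>In the ascending list, values \<open>\<ge> t\<close> form a suffix; if the value at position
  \<open>card A - i\<close> were below \<open>t\<close>, that suffix would have fewer than \<open>i\<close> entries.\<close>

lemma nth_largest_ge:
  assumes "finite A" "1 \<le> i" "W \<subseteq> A" "i \<le> card W" "\<forall>w\<in>W. t \<le> f w"
  shows "t \<le> nth_largest f A i"
proof (rule ccontr)
  define S where "S = sorted_values f A"
  define m where "m = card A - i"
  have "card W \<le> card A"
    using assms(1,3) by (rule card_mono)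
  then have iA: "i \<le> card A"
    using assms(4) by simp
  have len: "length S = card A"
    by (simp add: S_def length_sorted_values)
  assume "\<not> t \<le> nth_largest f A i"
  then have "S ! m < t"
    using nth_largest_conv_sorted_values[OF assms(1,2) iA] by (simp add: S_def m_def)
  have "{j. j < length S \<and> t \<le> S ! j} \<subseteq> {m<..<card A}"
  proof
    fix j assume j: "j \<in> {j. j < length S \<and> t \<le> S ! j}"
    have "\<not> j \<le> m"
    proof
      assume "j \<le> m"
      then have "S ! j \<le> S ! m"
        using sorted_nth_mono[OF sorted_sorted_values, of j m f A] len iA assms(2)
        by (simp add: S_def m_def)
      with \<open>S ! m < t\<close> j show False
        by simp
    qed
    with j len show "j \<in> {m<..<card A}"
      by auto
  qed
  then have "card {j. j < length S \<and> t \<le> S ! j} \<le> i - 1"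
    using card_mono[of "{m<..<card A}"] iA by (simp add: m_def)
  moreover have "card W \<le> card {a\<in>A. t \<le> f a}"
    using assms by (intro card_mono) auto
  ultimately show False
    using assms(2,4) length_filter_sorted_values[OF assms(1), of "\<lambda>x. t \<le> x" f]
    by (simp add: S_def length_filter_conv_card)
qed

lemma nth_largest_gt:
  assumes "finite A" "1 \<le> i" "W \<subseteq> A" "i \<le> card W" "\<forall>w\<in>W. t < f w"
  shows "t < nth_largest f A i"
proof -
  have "finite W" "W \<noteq> {}"
    using assms finite_subset by auto
  then have "t < Min (f ` W)"
    using assms(5) by simp
  also have "Min (f ` W) \<le> nth_largest f A i"
    using \<open>finite W\<close> by (intro nth_largest_ge[OF assms(1-4)]) auto
  finally show ?thesis .
qed

lemma card_ge_nth_largest: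
  assumes "finite A" "1 \<le> i" "i \<le> card A"
  shows "i \<le> card {a\<in>A. nth_largest f A i \<le> f a}"
proof -
  define S where "S = sorted_values f A"
  define m where "m = card A - i"
  have len: "length S = card A"
    by (simp add: S_def length_sorted_values)
  have "{m..<card A} \<subseteq> {j. j < length S \<and> S ! m \<le> S ! j}"
    using sorted_sorted_values[of f A] len by (auto simp: S_def intro: sorted_nth_mono)
  then have "card {m..<card A} \<le> card {j. j < length S \<and> S ! m \<le> S ! j}"
    by (intro card_mono) auto
  also have "\<dots> = card {a\<in>A. S ! m \<le> f a}"
    by (simp add: length_filter_conv_card[symmetric] S_def length_filter_sorted_values[OF assms(1)])
  finally show ?thesis
    using nth_largest_conv_sorted_values[OF assms] assms(3) by (simp add: S_def m_def)
qed

text \<open>\<open>A\<^sub>i \<le> O\<^sub>i\<close> because \<open>B \<subseteq> \<Gamma>\<close>. Conversely, let \<open>c\<close> be the \<open>i\<close>-th largest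
  estimate. Of the at least \<open>i\<close> elements whose estimate is \<open>\<ge> c\<close>, either all lie in
  \<open>B\<close>, or one lies outside and then every element of \<open>B\<close> has estimate \<open>\<ge> c\<close>; either
  way \<open>B\<close> contains \<open>i\<close> elements with estimate \<open>\<ge> c\<close>, and their true values exceed
  \<open>c - \<delta> > O\<^sub>i - 2\<delta>\<close>.\<close>

lemma nth_largest_top_approx:
  fixes f g :: "'e \<Rightarrow> real"
  assumes "finite \<Gamma>" "is_top b g \<Gamma> B" "1 \<le> i" "i \<le> b" "\<forall>e\<in>\<Gamma>. \<bar>g e - f e\<bar> < \<delta>"
  shows "\<bar>nth_largest f \<Gamma> i - nth_largest f B i\<bar> < 2 * \<delta>"
proof -
  have BG: "B \<subseteq> \<Gamma>" and iB: "i \<le> card B" and top: "\<forall>x\<in>B. \<forall>y\<in>\<Gamma> - B. g y \<le> g x"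
    using assms(2,4) unfolding is_top_def by auto
  have fB: "finite B"
    using BG assms(1) finite_subset by blast
  have iG: "i \<le> card \<Gamma>"
    using card_mono[OF assms(1) BG] iB by simp
  define Oi where "Oi = nth_largest f \<Gamma> i"
  define Ai where "Ai = nth_largest f B i"
  define c where "c = nth_largest g \<Gamma> i"
  have "Ai \<le> Oi"
    unfolding Oi_def
    using card_ge_nth_largest[OF fB assms(3) iB, of f] BG
    by (intro nth_largest_ge[OF assms(1,3), of "{x\<in>B. Ai \<le> f x}"]) (auto simp: Ai_def)
  have "Oi - \<delta> < c"
    unfolding c_def
    using card_ge_nth_largest[OF assms(1,3) iG, of f] assms(5)
    by (intro nth_largest_gt[OF assms(1,3), of "{x\<in>\<Gamma>. Oi \<le> f x}"]) (fastforce simp: Oi_def)+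
  define W where "W = {x\<in>B. c \<le> g x}"
  have "i \<le> card W"
  proof (cases "{x\<in>\<Gamma>. c \<le> g x} \<subseteq> B")
    case True
    then have "{x\<in>\<Gamma>. c \<le> g x} \<subseteq> W"
      by (auto simp: W_def)
    with fB have "card {x\<in>\<Gamma>. c \<le> g x} \<le> card W"
      by (intro card_mono) (auto simp: W_def)
    then show ?thesis
      using card_ge_nth_largest[OF assms(1,3) iG, of g]
      by (simp add: W_def c_def)
  next
    case False
    then obtain y where y: "y \<in> \<Gamma> - B" "c \<le> g y"
      by auto
    have "c \<le> g x" if "x \<in> B" for x
      using top that y order_trans by blast
    then have "W = B"
      by (auto simp: W_def)
    then show ?thesis
      using iB by simp
  qed
  moreover have "\<forall>w\<in>W. Oi - 2 * \<delta> < f w"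
  proof
    fix w assume "w \<in> W"
    then have "c \<le> g w" "\<bar>g w - f w\<bar> < \<delta>"
      using assms(5) BG by (auto simp: W_def)
    with \<open>Oi - \<delta> < c\<close> show "Oi - 2 * \<delta> < f w"
      by (simp add: abs_less_iff)
  qed
  moreover have "W \<subseteq> B"
    by (auto simp: W_def)
  ultimately have "Oi - 2 * \<delta> < Ai"
    unfolding Ai_def using nth_largest_gt[OF fB assms(3)] by blast
  with \<open>Ai \<le> Oi\<close> show ?thesis
    by (simp add: Oi_def Ai_def)
qed

theorem corollary1:
  fixes V :: "'a set" and E \<Gamma> :: "'a set set" and k l s b i :: nat and \<epsilon> :: real
    and sel :: "('a set \<Rightarrow> real) \<Rightarrow> 'a set set"
  assumes "simple_graph V E"
    and "\<Gamma> \<subseteq> E" and "card \<Gamma> \<ge> 2"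
    and "0 < \<epsilon>" and "\<epsilon> < 1"
    and "l \<ge> 1"
    and "real s \<ge> (real l + 1) * ln (real (card \<Gamma>)) / (2 * \<epsilon>^2)"
    and "b \<le> card \<Gamma>"
    and "\<And>f. is_top b f \<Gamma> (sel f)"
    and "Nk k V E > 0"
    and "1 \<le> i" and "i \<le> b"
  shows "measure_pmf.prob (perm_samples \<Gamma> s)
           {\<omega>. \<bar>nth_largest (shapley k V E \<Gamma>) \<Gamma> i
                 - nth_largest (shapley k V E \<Gamma>) (sel (shapley_est k V E s \<omega>)) i\<bar>
               < 2 * \<epsilon> * real (Nk k V E)}
         \<ge> 1 - 2 / real (card \<Gamma>) ^ l"
proof -
  have "finite V"
    using assms(1) by (simp add: simple_graph_def)
  have "finite \<Gamma>"
    using assms(3) card.infinite by fastforce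
  have "{\<omega>. \<forall>e\<in>\<Gamma>. \<bar>shapley_est k V E s \<omega> e - shapley k V E \<Gamma> e\<bar> < \<epsilon> * real (Nk k V E)}
        \<subseteq> {\<omega>. \<bar>nth_largest (shapley k V E \<Gamma>) \<Gamma> i
                 - nth_largest (shapley k V E \<Gamma>) (sel (shapley_est k V E s \<omega>)) i\<bar>
               < 2 * \<epsilon> * real (Nk k V E)}" (is "?close \<subseteq> ?goal")
    using nth_largest_top_approx[OF \<open>finite \<Gamma>\<close> assms(9,11,12)] by (auto simp: mult.assoc)
  then have "measure_pmf.prob (perm_samples \<Gamma> s) ?close
               \<le> measure_pmf.prob (perm_samples \<Gamma> s) ?goal"
    by (intro measure_pmf.finite_measure_mono) simp_all
  with prob_all_shapley_est_close[OF \<open>finite V\<close> \<open>finite \<Gamma>\<close> assms(3,4,10,7)]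
  show ?thesis
    by (rule order_trans)
qed

end
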